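(* Let $n\in\mathbb N$. Then $\delta(m)<\delta(n)$ for every $m\in\mathbb N$ with $m<n$ if and only if $n=1$ or $n$ is a prime number.
   Context: $\mathbb N$ is the set of positive integers. For $n\in\mathbb N$, $\delta(n)=\min\{\,r+s : r,s\in\mathbb N,\ r\le s,\ rs=n\,\}$, i.e. the minimum of $d+n/d$ over positive divisors $d$ of $n$. *)

theory Defs
  imports Main "HOL-Computational_Algebra.Primes"
begin

definition delta :: "nat \<Rightarrow> nat" where
  "delta n = Min {r + s | r s. 0 < r \<and> 0 < s \<and> r \<le> s \<and> r * s = n}"

end

theory Submission
  imports Defs "HOL-Library.Discrete_Functions"
begin

text \<open>
  If \<open>n\<close> is prime then \<open>\<delta>(n) = n + 1\<close>, while \<open>\<delta>(m) \<le> m + 1\<close> always, so \<open>\<delta>\<close> jumps to a new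
  record at \<open>n\<close>. If \<open>n = r s\<close> with \<open>2 \<le> r \<le> s\<close>, then \<open>(r - 2)(s - 2) \<ge> 0\<close> gives
  \<open>\<delta>(n) \<le> r + s \<le> n/2 + 2\<close>, whereas Bertrand's postulate yields a prime \<open>q\<close> with
  \<open>n/2 < q < n\<close> and hence \<open>\<delta>(q) = q + 1 \<ge> \<delta>(n)\<close>.

  Bertrand's postulate is proved along the lines of Erdos: a prime power dividing
  \<open>C = (2n choose n)\<close> is at most \<open>2n\<close>, primes in \<open>(2n/3, n]\<close> do not divide \<open>C\<close>, and the primes
  above \<open>\<surd>(2n)\<close> divide \<open>C\<close> only once. Without a prime in \<open>(n, 2n]\<close> this bounds \<open>C\<close> by
  \<open>(2n)^\<surd>(2n) \<cdot> 4^(2n/3)\<close>, which contradicts \<open>4^n \<le> (2n + 1) C\<close> for \<open>n \<ge> 2048\<close>; smaller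
  \<open>n\<close> are covered by the primes 2, 3, 5, 7, 13, 23, 43, 83, 163, 317, 631, 1259, 2503,
  each less than twice its predecessor.
\<close>

section \<open>Legendre's formula and the central binomial coefficient\<close>

lemma multiplicity_eq_sum_prime_power_dvd:
  fixes p m k :: nat
  assumes p: "prime p" and "0 < m" and "m < p ^ k"
  shows "multiplicity p m = (\<Sum>i=1..k. if p ^ i dvd m then 1 else 0)"
proof -
  let ?j = "multiplicity p m"
  have "p ^ ?j \<le> m" using \<open>0 < m\<close> by (intro dvd_imp_le multiplicity_dvd)
  with \<open>m < p ^ k\<close> have "?j < k"
    using p prime_gt_1_nat power_less_imp_less_exp by (metis le_less_trans)
  have "p ^ i dvd m \<longleftrightarrow> i \<le> ?j" for i
    using p prime_gt_1_nat[OF p] \<open>0 < m\<close> power_dvd_iff_le_multiplicity[of m p] by simp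
  then have "{i \<in> {1..k}. p ^ i dvd m} = {i \<in> {1..k}. i \<le> ?j}" by simp
  also have "\<dots> = {1..?j}" using \<open>?j < k\<close> by auto
  finally show ?thesis by (simp flip: sum.inter_filter)
qed

lemma multiplicity_fact:
  fixes p n k :: nat
  assumes p: "prime p" and "n < p ^ k"
  shows "multiplicity p (fact n :: nat) = (\<Sum>i=1..k. n div p ^ i)"
  using \<open>n < p ^ k\<close>
proof (induction n)
  case (Suc n)
  have "multiplicity p (fact (Suc n) :: nat) = multiplicity p (Suc n * fact n)" by simp
  also have "\<dots> = multiplicity p (Suc n) + multiplicity p (fact n :: nat)"
    using p by (intro prime_elem_multiplicity_mult_distrib) auto
  also have "\<dots> = (\<Sum>i=1..k. (if p ^ i dvd Suc n then 1 else 0) + n div p ^ i)"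
    using Suc p by (simp add: multiplicity_eq_sum_prime_power_dvd sum.distrib)
  also have "\<dots> = (\<Sum>i=1..k. Suc n div p ^ i)"
    by (rule sum.cong) (auto simp: div_Suc dvd_eq_mod_eq_0)
  finally show ?case .
qed simp

lemma two_mult_div_le: "2 * (n div d) \<le> 2 * n div (d::nat)"
proof -
  have "2 * (n div d) * d \<le> 2 * n" by (simp add: mult.assoc times_div_less_eq_dividend)
  then have "2 * (n div d) * d div d \<le> 2 * n div d" by (rule div_le_mono)
  then show ?thesis by (cases "d = 0") simp_all
qed

lemma div_two_mult_le: "2 * n div d \<le> 2 * (n div d) + (1::nat)"
proof (cases "d = 0")
  case False
  have "n < (n div d + 1) * d" using False by (simp add: dividend_less_div_times)
  then have "2 * n < (2 * (n div d) + 2) * d" by (simp add: algebra_simps)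
  then have "2 * n div d < 2 * (n div d) + 2" by (rule less_mult_imp_div_less)
  then show ?thesis by simp
qed simp

lemma multiplicity_central_binomial:
  fixes p n k :: nat
  assumes p: "prime p" and "2 * n < p ^ k"
  shows "multiplicity p ((2 * n) choose n) = (\<Sum>i=1..k. 2 * n div p ^ i - 2 * (n div p ^ i))"
proof -
  have "fact (2 * n) = fact n * fact n * ((2 * n) choose n :: nat)"
    using binomial_fact_lemma[of n "2 * n"] by simp
  then have "multiplicity p (fact (2 * n) :: nat)
      = 2 * multiplicity p (fact n :: nat) + multiplicity p ((2 * n) choose n)"
    using p by (simp add: prime_elem_multiplicity_mult_distrib)
  moreover have "multiplicity p (fact n :: nat) = (\<Sum>i=1..k. n div p ^ i)"
    using assms by (intro multiplicity_fact) simp_all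
  moreover have "multiplicity p (fact (2 * n) :: nat) = (\<Sum>i=1..k. 2 * n div p ^ i)"
    using assms by (rule multiplicity_fact)
  ultimately have "multiplicity p ((2 * n) choose n)
      = (\<Sum>i=1..k. 2 * n div p ^ i) - (\<Sum>i=1..k. 2 * (n div p ^ i))"
    by (simp add: sum_distrib_left)
  also have "\<dots> = (\<Sum>i=1..k. 2 * n div p ^ i - 2 * (n div p ^ i))"
    by (rule sum_subtractf_nat[symmetric]) (simp add: two_mult_div_le)
  finally show ?thesis .
qed

lemma prime_power_central_binomial_le:
  fixes p n :: nat
  assumes p: "prime p" and "0 < n"
  shows "p ^ multiplicity p ((2 * n) choose n) \<le> 2 * n"
proof (rule ccontr)
  let ?j = "multiplicity p ((2 * n) choose n)"
  let ?g = "\<lambda>i. 2 * n div p ^ i - 2 * (n div p ^ i)"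
  assume "\<not> ?thesis"
  then have big: "2 * n < p ^ ?j" by simp
  then have "0 < ?j" using \<open>0 < n\<close> by (cases ?j) simp_all
  \<comment> \<open>Each term of Legendre's sum is at most 1, and the last one vanishes.\<close>
  have "?j = (\<Sum>i=1..?j. ?g i)" using p big by (rule multiplicity_central_binomial)
  also have "\<dots> = (\<Sum>i\<in>{1..<?j}. ?g i) + ?g ?j"
    using \<open>0 < ?j\<close> by (simp add: sum.last_plus)
  also have "?g ?j = 0" using big by simp
  also have "(\<Sum>i\<in>{1..<?j}. ?g i) \<le> (\<Sum>i\<in>{1..<?j}. 1)"
  proof (rule sum_mono)
    show "?g i \<le> 1" for i using div_two_mult_le[of n "p ^ i"] by linarith
  qed
  finally show False using \<open>0 < ?j\<close> by simp
qed

lemma multiplicity_central_binomial_eq_0: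
  fixes p n :: nat
  assumes p: "prime p" and "2 < p" and "p \<le> n" and "2 * n < 3 * p"
  shows "multiplicity p ((2 * n) choose n) = 0"
proof -
  have "3 * p \<le> p * p" using \<open>2 < p\<close> by simp
  then have "2 * n < p ^ 2" using \<open>2 * n < 3 * p\<close> unfolding power2_eq_square by linarith
  moreover have "n div p = 1" "2 * n div p = 2" using assms by (simp_all add: div_nat_eqI)
  ultimately show ?thesis
    using multiplicity_central_binomial[OF p, of n 2] by (simp add: numeral_2_eq_2)
qed

lemma four_power_le_central_binomial: "4 ^ n \<le> (2 * n + 1) * ((2 * n) choose n)"
proof -
  have "4 ^ n = (\<Sum>k\<le>2 * n. (2 * n) choose k)" by (simp add: choose_row_sum power_mult)
  also have "\<dots> \<le> (\<Sum>k\<le>2 * n. (2 * n) choose n)" by (intro sum_mono binomial_maximum')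
  finally show ?thesis by simp
qed

section \<open>The primorial\<close>

definition primorial :: "nat \<Rightarrow> nat" where
  "primorial x = \<Prod>{p. prime p \<and> p \<le> x}"

lemma finite_primes_le: "finite {p::nat. prime p \<and> p \<le> x}"
  by (rule finite_subset[of _ "{..x}"]) auto

lemma prod_primes_dvd:
  fixes N :: nat
  assumes "finite S" and "\<And>p. p \<in> S \<Longrightarrow> prime p \<and> p dvd N"
  shows "\<Prod>S dvd N"
  using assms
proof (induction S rule: finite_induct)
  case (insert p S)
  have "coprime p (\<Prod>S)"
    using insert by (intro prod_coprime_right primes_coprime) auto
  then show ?case using insert by (simp add: divides_mult)
qed simp

lemma prime_dvd_binomial:
  fixes p n k :: nat
  assumes p: "prime p" and "p \<le> n" and "k < p" and "n - k < p"
  shows "p dvd n choose k"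
proof -
  have "k \<le> n" using assms by simp
  have "p dvd fact k * fact (n - k) * (n choose k)"
    using p \<open>p \<le> n\<close> binomial_fact_lemma[OF \<open>k \<le> n\<close>] by (simp add: prime_dvd_fact_iff)
  moreover have "\<not> p dvd fact k" "\<not> p dvd fact (n - k)"
    using assms by (simp_all add: prime_dvd_fact_iff)
  ultimately show ?thesis using p by (simp add: prime_dvd_mult_iff)
qed

lemma binomial_odd_middle_le: "(2 * m + 1) choose m \<le> 4 ^ m"
proof -
  have "(2 * m + 1) choose (m + 1) = (2 * m + 1) choose m"
    using central_binomial_odd[of "2 * m + 1"] by simp
  then have "2 * ((2 * m + 1) choose m) = (\<Sum>k\<in>{m, m + 1}. (2 * m + 1) choose k)" by simp
  also have "\<dots> \<le> (\<Sum>k\<le>2 * m + 1. (2 * m + 1) choose k)" by (intro sum_mono2) auto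
  also have "\<dots> = 2 ^ (2 * m + 1)" by (rule choose_row_sum)
  also have "\<dots> = 2 * 4 ^ m" by (simp add: power_mult)
  finally show ?thesis by simp
qed

lemma prod_primes_between_le:
  "\<Prod>{p. prime p \<and> m + 1 < p \<and> p \<le> 2 * m + 1} \<le> 4 ^ m"
proof -
  let ?B = "{p. prime p \<and> m + 1 < p \<and> p \<le> 2 * m + 1}"
  have "finite ?B" by (rule finite_subset[OF _ finite_primes_le]) auto
  then have "\<Prod>?B \<le> (2 * m + 1) choose m"
    by (intro dvd_imp_le prod_primes_dvd) (auto intro!: prime_dvd_binomial)
  also have "\<dots> \<le> 4 ^ m" by (rule binomial_odd_middle_le)
  finally show ?thesis .
qed

lemma primorial_le_four_power: "primorial x \<le> 4 ^ x"
proof (induction x rule: less_induct)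
  case (less x)
  consider "x \<le> 2" | "2 < x" "even x" | m where "x = 2 * m + 1" "1 \<le> m"
  proof (cases "even x")
    case True
    with that(1,2) show ?thesis by linarith
  next
    case False
    then obtain m where "x = 2 * m + 1" by (rule oddE)
    with that(1,3) show ?thesis by (cases "m = 0") auto
  qed
  then show ?case
  proof cases
    case 1
    then have "{p. prime p \<and> p \<le> x} = (if x = 2 then {2} else {})"
      by (auto dest: prime_ge_2_nat)
    then show ?thesis by (simp add: primorial_def)
  next
    case 2
    then have "\<not> prime x" using prime_odd_nat by blast
    then have "prime p \<and> p \<le> x \<longleftrightarrow> prime p \<and> p \<le> x - 1" for p by (cases "p = x") auto
    then have "{p. prime p \<and> p \<le> x} = {p. prime p \<and> p \<le> x - 1}" by (intro Collect_cong)
    then have "primorial x = primorial (x - 1)" by (simp add: primorial_def)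
    also have "\<dots> \<le> 4 ^ (x - 1)" using 2 less by simp
    also have "\<dots> \<le> 4 ^ x" by simp
    finally show ?thesis .
  next
    case 3
    let ?A = "{p. prime p \<and> p \<le> m + 1}"
    let ?B = "{p. prime p \<and> m + 1 < p \<and> p \<le> 2 * m + 1}"
    have "{p. prime p \<and> p \<le> x} = ?A \<union> ?B" using 3 by auto
    moreover have "finite ?B" by (rule finite_subset[OF _ finite_primes_le]) auto
    moreover have "?A \<inter> ?B = {}" by auto
    ultimately have "primorial x = \<Prod>?A * \<Prod>?B"
      unfolding primorial_def using finite_primes_le by (simp add: prod.union_disjoint)
    also have "\<Prod>?A \<le> 4 ^ (m + 1)"
      using less[of "m + 1"] 3 by (simp add: primorial_def)
    also have "\<Prod>?B \<le> 4 ^ m" by (rule prod_primes_between_le)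
    also have "4 ^ (m + 1) * 4 ^ m = (4::nat) ^ x" using 3 by (simp flip: power_add)
    finally show ?thesis by simp
  qed
qed

section \<open>Bertrand's postulate\<close>

lemma prime_factor_central_binomial_le:
  fixes n p :: nat
  assumes "3 \<le> n" and no_prime: "\<not> (\<exists>q. prime q \<and> n < q \<and> q \<le> 2 * n)"
    and p: "p \<in> prime_factors ((2 * n) choose n)"
  shows "3 * p \<le> 2 * n"
proof (rule ccontr)
  assume "\<not> 3 * p \<le> 2 * n"
  have "prime p" and "p dvd (2 * n) choose n" using p by auto
  moreover have "fact (2 * n) = fact n * fact n * ((2 * n) choose n :: nat)"
    using binomial_fact_lemma[of n "2 * n"] by simp
  ultimately have "p dvd fact (2 * n)" by (simp add: dvd_mult)
  then have "p \<le> 2 * n" using \<open>prime p\<close> by (simp add: prime_dvd_fact_iff)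
  then have "p \<le> n" using \<open>prime p\<close> no_prime by (meson not_le)
  then have "multiplicity p ((2 * n) choose n) = 0"
    using \<open>prime p\<close> \<open>3 \<le> n\<close> \<open>\<not> 3 * p \<le> 2 * n\<close>
    by (intro multiplicity_central_binomial_eq_0) simp_all
  with p show False by (simp add: prime_factors_multiplicity)
qed

lemma prod_small_prime_factors_central_binomial_le:
  fixes n :: nat
  defines "C \<equiv> (2 * n) choose n"
  shows "(\<Prod>p\<in>prime_factors C \<inter> {..floor_sqrt (2 * n)}. p ^ multiplicity p C)
    \<le> (2 * n) ^ floor_sqrt (2 * n)"
proof (cases "n = 0")
  case False
  let ?S = "prime_factors C \<inter> {..floor_sqrt (2 * n)}"
  have "(\<Prod>p\<in>?S. p ^ multiplicity p C) \<le> (\<Prod>p\<in>?S. 2 * n)"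
    unfolding C_def using False by (intro prod_mono) (auto intro: prime_power_central_binomial_le)
  also have "\<dots> = (2 * n) ^ card ?S" by simp
  also have "\<dots> \<le> (2 * n) ^ floor_sqrt (2 * n)"
  proof -
    have "?S \<subseteq> {1..floor_sqrt (2 * n)}" by (auto dest: prime_factors_gt_0_nat)
    then have "card ?S \<le> floor_sqrt (2 * n)" using card_mono[of "{1..floor_sqrt (2 * n)}"] by simp
    with False show ?thesis by (intro power_increasing) simp_all
  qed
  finally show ?thesis .
qed (simp add: C_def)

lemma prod_large_prime_factors_central_binomial_le:
  fixes n :: nat
  defines "C \<equiv> (2 * n) choose n"
  assumes "3 \<le> n" and no_prime: "\<not> (\<exists>q. prime q \<and> n < q \<and> q \<le> 2 * n)"
  shows "(\<Prod>p\<in>prime_factors C - {..floor_sqrt (2 * n)}. p ^ multiplicity p C) \<le> 4 ^ (2 * n div 3)"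
proof -
  let ?L = "prime_factors C - {..floor_sqrt (2 * n)}"
  \<comment> \<open>Above \<open>\<surd>(2n)\<close> the bound \<open>p ^ multiplicity p C \<le> 2n < p\<^sup>2\<close> forces multiplicity 1.\<close>
  have "p ^ multiplicity p C = p" if "p \<in> ?L" for p
  proof -
    from that have "prime p" and "0 < multiplicity p C" by (auto simp: prime_factors_multiplicity)
    have "p ^ multiplicity p C \<le> 2 * n"
      unfolding C_def using \<open>prime p\<close> \<open>3 \<le> n\<close> by (intro prime_power_central_binomial_le) simp_all
    also have "2 * n < p ^ 2" using that by (simp add: le_floor_sqrt_iff)
    finally have "multiplicity p C < 2"
      using \<open>prime p\<close> prime_gt_1_nat power_less_imp_less_exp by blast
    with \<open>0 < multiplicity p C\<close> have "multiplicity p C = 1" by linarith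
    then show ?thesis by simp
  qed
  then have "(\<Prod>p\<in>?L. p ^ multiplicity p C) = \<Prod>?L" by simp
  also have "\<dots> \<le> primorial (2 * n div 3)"
  proof (rule dvd_imp_le)
    have "?L \<subseteq> {p. prime p \<and> p \<le> 2 * n div 3}"
      using prime_factor_central_binomial_le[OF \<open>3 \<le> n\<close> no_prime] unfolding C_def by fastforce
    then show "\<Prod>?L dvd primorial (2 * n div 3)"
      unfolding primorial_def by (intro prod_dvd_prod_subset finite_primes_le)
    show "0 < primorial (2 * n div 3)"
      unfolding primorial_def by (auto intro: prod_pos dest: prime_gt_0_nat)
  qed
  also have "\<dots> \<le> 4 ^ (2 * n div 3)" by (rule primorial_le_four_power)
  finally show ?thesis .
qed

lemma central_binomial_le_without_bertrand_prime:
  fixes n :: nat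
  assumes "3 \<le> n" and "\<not> (\<exists>q. prime q \<and> n < q \<and> q \<le> 2 * n)"
  shows "(2 * n) choose n \<le> (2 * n) ^ floor_sqrt (2 * n) * 4 ^ (2 * n div 3)"
proof -
  let ?C = "(2 * n) choose n" and ?T = "{..floor_sqrt (2 * n)}"
  have "?C = (\<Prod>p\<in>prime_factors ?C. p ^ multiplicity p ?C)"
    by (rule prime_factorization_nat) simp
  also have "\<dots> = (\<Prod>p\<in>prime_factors ?C \<inter> ?T. p ^ multiplicity p ?C)
      * (\<Prod>p\<in>prime_factors ?C - ?T. p ^ multiplicity p ?C)"
    by (rule prod.Int_Diff) simp
  also have "\<dots> \<le> (2 * n) ^ floor_sqrt (2 * n) * 4 ^ (2 * n div 3)"
    using assms by (intro mult_le_mono prod_small_prime_factors_central_binomial_le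
        prod_large_prime_factors_central_binomial_le)
  finally show ?thesis .
qed

lemma power_8_le_two_power:
  fixes t :: nat
  assumes "64 \<le> t"
  shows "(t + 1) ^ 8 \<le> 2 ^ t"
  using assms
proof (induction t rule: dec_induct)
  case (step t)
  \<comment> \<open>\<open>(t + 2)/(t + 1) \<le> 13/12\<close> and \<open>(13/12)^8 < 2\<close>.\<close>
  define A where "A = (t + 2) ^ 8"
  define B where "B = (t + 1) ^ 8"
  have "(12 * (t + 2)) ^ 8 \<le> (13 * (t + 1)) ^ 8" using step by (intro power_mono) simp_all
  then have "12 ^ 8 * A \<le> 13 ^ 8 * B" unfolding A_def B_def by (simp only: power_mult_distrib)
  then have "A \<le> 2 * B" by simp
  moreover have "B \<le> 2 ^ t" using step.IH by (simp add: B_def)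
  moreover have "(Suc t + 1) ^ 8 = A" by (simp add: A_def)
  ultimately show ?case by simp
qed simp

lemma erdos_bound_cube_lt:
  fixes n :: nat
  assumes "2048 \<le> n"
  shows "((2 * n + 1) * (2 * n) ^ floor_sqrt (2 * n)) ^ 3 < 4 ^ n"
proof -
  define t where "t = floor_sqrt (2 * n)"
  have "t ^ 2 \<le> 2 * n" and "2 * n < (t + 1) ^ 2"
    unfolding t_def using Suc_floor_sqrt_power2_gt by simp_all
  have "64 \<le> t" unfolding t_def using assms by (simp add: le_floor_sqrt_iff)
  have "(2 * n + 1) * (2 * n) ^ t \<le> (t + 1) ^ 2 * ((t + 1) ^ 2) ^ t"
    using \<open>2 * n < (t + 1) ^ 2\<close> by (intro power_mono mult_le_mono) simp_all
  also have "\<dots> = (t + 1) ^ (2 * t + 2)"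
    by (simp only: power_mult[symmetric] power_add[symmetric] add.commute)
  finally have "((2 * n + 1) * (2 * n) ^ t) ^ 24 \<le> ((t + 1) ^ (2 * t + 2)) ^ 24"
    by (rule power_mono) simp
  also have "\<dots> = ((t + 1) ^ 8) ^ (6 * t + 6)"
  proof -
    have "(2 * t + 2) * 24 = 8 * (6 * t + 6)" by simp
    then show ?thesis by (simp only: power_mult[symmetric])
  qed
  also have "\<dots> \<le> (2 ^ t) ^ (6 * t + 6)"
    using \<open>64 \<le> t\<close> by (intro power_mono power_8_le_two_power) simp_all
  also have "\<dots> = 2 ^ (6 * t * t + 6 * t)" by (simp flip: power_mult add: algebra_simps)
  also have "\<dots> < 2 ^ (16 * n)"
  proof (rule power_strict_increasing)
    have "6 * t < 2 * (t * t)" using \<open>64 \<le> t\<close> by simp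
    moreover have "t * t \<le> 2 * n" using \<open>t ^ 2 \<le> 2 * n\<close> by (simp add: power2_eq_square)
    ultimately show "6 * t * t + 6 * t < 16 * n" by linarith
  qed simp
  also have "\<dots> = (2 ^ 2) ^ (8 * n)" by (simp only: power_mult[symmetric]) simp
  also have "\<dots> = (4 ^ n) ^ 8" by (simp flip: power_mult add: mult.commute)
  finally have "(((2 * n + 1) * (2 * n) ^ t) ^ 3) ^ 8 < (4 ^ n) ^ 8" by (simp flip: power_mult)
  then show ?thesis unfolding t_def by (rule power_less_imp_less_base) simp
qed

lemma erdos_bound_lt_four_power:
  fixes n :: nat
  assumes "2048 \<le> n"
  shows "(2 * n + 1) * ((2 * n) ^ floor_sqrt (2 * n) * 4 ^ (2 * n div 3)) < 4 ^ n"
proof -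
  define X where "X = (2 * n + 1) * (2 * n) ^ floor_sqrt (2 * n)"
  have "(X * 4 ^ (2 * n div 3)) ^ 3 = X ^ 3 * 4 ^ (3 * (2 * n div 3))"
    by (simp add: power_mult_distrib flip: power_mult)
  also have "\<dots> < 4 ^ n * 4 ^ (2 * n)"
    unfolding X_def using erdos_bound_cube_lt[OF assms]
    by (intro mult_less_le_imp_less power_increasing) simp_all
  also have "\<dots> = (4 ^ n) ^ 3" by (simp flip: power_add power_mult)
  finally have "X * 4 ^ (2 * n div 3) < 4 ^ n" by (rule power_less_imp_less_base) simp
  then show ?thesis by (simp only: X_def mult.assoc)
qed

lemma bertrand_large:
  fixes n :: nat
  assumes "2048 \<le> n"
  shows "\<exists>p. prime p \<and> n < p \<and> p \<le> 2 * n"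
proof (rule ccontr)
  assume "\<not> ?thesis"
  then have "(2 * n) choose n \<le> (2 * n) ^ floor_sqrt (2 * n) * 4 ^ (2 * n div 3)"
    using assms by (intro central_binomial_le_without_bertrand_prime) simp_all
  then have "4 ^ n \<le> (2 * n + 1) * ((2 * n) ^ floor_sqrt (2 * n) * 4 ^ (2 * n div 3))"
    using four_power_le_central_binomial[of n] by (meson le_trans mult_le_mono2)
  with erdos_bound_lt_four_power[OF assms] show False by simp
qed

lemma prime_if_no_small_divisor:
  fixes p k :: nat
  assumes "1 < p" and "p < k * k" and no_dvd: "\<forall>d\<in>set [2..<k]. \<not> d dvd p"
  shows "prime p"
  unfolding prime_nat_iff'
proof (intro conjI ballI notI)
  fix d assume d: "d \<in> {2..<p}" "d dvd p"
  then obtain e where p: "p = d * e" by blast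
  with d have "2 \<le> e" by (cases e) auto
  have "e dvd p" using p by simp
  have "d < k \<or> e < k"
    using p \<open>p < k * k\<close> mult_le_mono[of k d k e] by linarith
  then show False using no_dvd d \<open>e dvd p\<close> \<open>2 \<le> e\<close> by auto
qed (rule assms)

definition bertrand_below :: "nat \<Rightarrow> bool" where
  "bertrand_below a \<longleftrightarrow> (\<forall>n. 0 < n \<and> n < a \<longrightarrow> (\<exists>p. prime p \<and> n < p \<and> p \<le> 2 * n))"

lemma bertrand_below_prime:
  assumes "bertrand_below a" and "prime q" and "q \<le> 2 * a"
  shows "bertrand_below q"
  unfolding bertrand_below_def
proof (intro allI impI)
  fix n assume n: "0 < n \<and> n < q"
  show "\<exists>p. prime p \<and> n < p \<and> p \<le> 2 * n"
  proof (cases "n < a")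
    case True
    with n assms(1) show ?thesis unfolding bertrand_below_def by blast
  next
    case False
    with n assms(2,3) show ?thesis by (intro exI[of _ q]) simp
  qed
qed

lemma bertrand_below_2503: "bertrand_below 2503"
proof -
  have "bertrand_below 1" by (simp add: bertrand_below_def)
  then have "bertrand_below 2" by (rule bertrand_below_prime) simp_all
  then have "bertrand_below 3" by (rule bertrand_below_prime) simp_all
  then have "bertrand_below 5" by (rule bertrand_below_prime) simp_all
  then have "bertrand_below 7" by (rule bertrand_below_prime) simp_all
  then have "bertrand_below 13" by (rule bertrand_below_prime) simp_all
  then have "bertrand_below 23" by (rule bertrand_below_prime) simp_all
  then have "bertrand_below 43" by (rule bertrand_below_prime) simp_all
  then have "bertrand_below 83" by (rule bertrand_below_prime) simp_all
  then have "bertrand_below 163" by (rule bertrand_below_prime) simp_all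
  then have "bertrand_below 317"
    by (rule bertrand_below_prime) (rule prime_if_no_small_divisor[where k = 18], simp_all)
  then have "bertrand_below 631"
    by (rule bertrand_below_prime) (rule prime_if_no_small_divisor[where k = 26], simp_all)
  then have "bertrand_below 1259"
    by (rule bertrand_below_prime) (rule prime_if_no_small_divisor[where k = 36], simp_all)
  then show "bertrand_below 2503"
    by (rule bertrand_below_prime) (rule prime_if_no_small_divisor[where k = 51], simp_all)
qed

theorem bertrand:
  fixes n :: nat
  assumes "0 < n"
  shows "\<exists>p. prime p \<and> n < p \<and> p \<le> 2 * n"
proof (cases "2048 \<le> n")
  case True
  then show ?thesis by (rule bertrand_large)
next
  case False
  with assms bertrand_below_2503 show ?thesis unfolding bertrand_below_def by simp
qed

section \<open>The function \<open>\<delta>\<close>\<close>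

lemma finite_delta_set:
  "finite {r + s | r s. 0 < r \<and> 0 < s \<and> r \<le> s \<and> r * s = (n::nat)}"
proof (rule finite_subset[of _ "{..n + 1}"])
  have "r + s \<le> r * s + 1" if "0 < r" "0 < s" for r s :: nat
    using that by (cases r; cases s) simp_all
  then show "{r + s | r s. 0 < r \<and> 0 < s \<and> r \<le> s \<and> r * s = n} \<subseteq> {..n + 1}" by auto
qed simp

lemma delta_le:
  fixes r s :: nat
  assumes "0 < r" and "r \<le> s"
  shows "delta (r * s) \<le> r + s"
proof -
  have "0 < s" using assms by simp
  with assms show ?thesis
    unfolding delta_def by (intro Min_le finite_delta_set) blast
qed

lemma delta_attained:
  fixes n :: nat
  assumes "0 < n"
  obtains r s where "0 < r" "r \<le> s" "r * s = n" "delta n = r + s"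
proof -
  have "1 + n \<in> {r + s | r s. 0 < r \<and> 0 < s \<and> r \<le> s \<and> r * s = n}"
    using assms by (intro CollectI exI[of _ 1] exI[of _ n]) simp
  then have "delta n \<in> {r + s | r s. 0 < r \<and> 0 < s \<and> r \<le> s \<and> r * s = n}"
    unfolding delta_def by (intro Min_in finite_delta_set) blast
  with that show ?thesis by blast
qed

lemma delta_le_Suc: "0 < m \<Longrightarrow> delta m \<le> m + 1"
  using delta_le[of 1 m] by simp

lemma delta_prime:
  fixes q :: nat
  assumes q: "prime q"
  shows "delta q = q + 1"
proof -
  obtain r s where rs: "0 < r" "r \<le> s" "r * s = q" "delta q = r + s"
    using q prime_gt_0_nat delta_attained by metis
  have "r dvd q" using rs(3) by auto
  with q have "r = 1 \<or> r = q" using prime_nat_iff by blast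
  moreover have "r \<noteq> q"
  proof
    assume "r = q"
    with rs(3) q have "s = 1" by (simp add: prime_gt_0_nat)
    with rs(2) \<open>r = q\<close> prime_gt_1_nat[OF q] show False by simp
  qed
  ultimately show ?thesis using rs by auto
qed

lemma delta_composite_le:
  fixes n :: nat
  assumes "1 < n" and "\<not> prime n"
  shows "delta n \<le> n div 2 + 2"
proof -
  obtain r s where rs: "2 \<le> r" "r \<le> s" "r * s = n"
  proof -
    from assms obtain d where d: "d dvd n" "d \<noteq> 1" "d \<noteq> n" by (auto simp: prime_nat_iff)
    then obtain e where n: "n = d * e" by blast
    with d assms have "d \<noteq> 0" "e \<noteq> 0" "e \<noteq> 1" by auto
    with d have "2 \<le> d" "2 \<le> e" by auto
    with n that[of "min d e" "max d e"] show ?thesis by (simp add: min_def max_def mult.commute)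
  qed
  have "2 * (r + s) \<le> r * s + 4"
  proof -
    obtain a b where "r = 2 + a" "s = 2 + b" using rs by (auto simp: le_iff_add)
    then show ?thesis by (simp add: algebra_simps)
  qed
  then have "2 * (r + s) \<le> n + 4" using \<open>r * s = n\<close> by simp
  moreover have "delta n \<le> r + s" using rs delta_le[of r s] by simp
  ultimately have "2 * delta n \<le> n + 4" by arith
  then show ?thesis by presburger
qed

lemma delta_less_prime:
  fixes m n :: nat
  assumes "prime n" and "0 < m" and "m < n"
  shows "delta m < delta n"
  using assms delta_le_Suc[of m] delta_prime[OF \<open>prime n\<close>] by simp

lemma exists_smaller_with_delta_ge:
  fixes n :: nat
  assumes "1 < n" and "\<not> prime n"
  obtains q where "0 < q" "q < n" "delta n \<le> delta q"
proof -
  obtain q where q: "prime q" "n div 2 < q" "q \<le> 2 * (n div 2)"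
    using bertrand[of "n div 2"] \<open>1 < n\<close> by auto
  have "q \<le> n" using q(3) by linarith
  with \<open>prime q\<close> \<open>\<not> prime n\<close> have "q < n" by (cases "q = n") simp_all
  moreover have "delta n \<le> delta q"
    using delta_composite_le[OF assms] delta_prime[OF \<open>prime q\<close>] q(2) by simp
  ultimately show ?thesis using that prime_gt_0_nat[OF \<open>prime q\<close>] by blast
qed

theorem proposition5p1:
  fixes n :: nat
  assumes "0 < n"
  shows "(\<forall>m. 0 < m \<and> m < n \<longrightarrow> delta m < delta n) \<longleftrightarrow> (n = 1 \<or> prime n)"
proof
  assume "n = 1 \<or> prime n"
  then show "\<forall>m. 0 < m \<and> m < n \<longrightarrow> delta m < delta n"
    using delta_less_prime by auto
next
  assume delta_record: "\<forall>m. 0 < m \<and> m < n \<longrightarrow> delta m < delta n"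
  show "n = 1 \<or> prime n"
  proof (rule ccontr)
    assume "\<not> (n = 1 \<or> prime n)"
    with assms have "1 < n" and "\<not> prime n" by auto
    then obtain q where "0 < q" "q < n" "delta n \<le> delta q"
      by (rule exists_smaller_with_delta_ge)
    with delta_record show False by (meson not_le)
  qed
qed

end
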